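(* Let $(S,\le)$ be a well-quasi-order and $k\in\mathbb{N}$. The set of all finite $k$-path bounded $S$-graphs, ordered by the induced subgraph ordering $\sqsubseteq$, is a well-quasi-order.
   Context: An $S$-graph is a finite undirected graph $(V,E,L)$ with labelling $L:V\to S$. For $S$-graphs $\theta_1=(V_1,E_1,L_1)$, $\theta_2=(V_2,E_2,L_2)$, $\theta_1\sqsubseteq\theta_2$ iff there is an injection $h:V_1\to V_2$ such that for all $u,v\in V_1$: $(u,v)\in E_1\iff(h(u),h(v))\in E_2$, and $L_1(u)\le L_2(h(u))$. A graph is $k$-path bounded if its longest simple path has length at most $k$. *)

theory Defs
  imports Main
begin

definition wqo_on :: "('a \<Rightarrow> 'a \<Rightarrow> bool) \<Rightarrow> 'a set \<Rightarrow> bool" where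
  "wqo_on le A \<longleftrightarrow>
     (\<forall>x\<in>A. le x x) \<and>
     (\<forall>x\<in>A. \<forall>y\<in>A. \<forall>z\<in>A. le x y \<longrightarrow> le y z \<longrightarrow> le x z) \<and>
     (\<forall>f::nat \<Rightarrow> 'a. (\<forall>i. f i \<in> A) \<longrightarrow> (\<exists>i j. i < j \<and> le (f i) (f j)))"

type_synonym ('v, 's) sgraph = "'v set \<times> ('v \<times> 'v) set \<times> ('v \<Rightarrow> 's)"

definition is_sgraph :: "'s set \<Rightarrow> ('v, 's) sgraph \<Rightarrow> bool" where
  "is_sgraph S G \<longleftrightarrow> (case G of (V, E, L) \<Rightarrow>
     finite V \<and> E \<subseteq> V \<times> V \<and> (\<forall>u v. (u, v) \<in> E \<longrightarrow> (v, u) \<in> E) \<and>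
     (\<forall>v. (v, v) \<notin> E) \<and> (\<forall>v\<in>V. L v \<in> S))"

definition sgraph_le :: "('s \<Rightarrow> 's \<Rightarrow> bool) \<Rightarrow> ('v, 's) sgraph \<Rightarrow> ('v, 's) sgraph \<Rightarrow> bool" where
  "sgraph_le le G1 G2 \<longleftrightarrow> (case G1 of (V1, E1, L1) \<Rightarrow> case G2 of (V2, E2, L2) \<Rightarrow>
     (\<exists>h. inj_on h V1 \<and> h ` V1 \<subseteq> V2 \<and>
          (\<forall>u\<in>V1. \<forall>v\<in>V1. (u, v) \<in> E1 \<longleftrightarrow> (h u, h v) \<in> E2) \<and>
          (\<forall>u\<in>V1. le (L1 u) (L2 (h u)))))"

text \<open>A simple path: a nonempty list of distinct vertices, consecutive ones adjacent.
  Its length is the number of edges, i.e. length xs - 1.\<close>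
definition simple_path :: "('v, 's) sgraph \<Rightarrow> 'v list \<Rightarrow> bool" where
  "simple_path G xs \<longleftrightarrow> (case G of (V, E, L) \<Rightarrow>
     xs \<noteq> [] \<and> distinct xs \<and> set xs \<subseteq> V \<and>
     (\<forall>i. Suc i < length xs \<longrightarrow> (xs ! i, xs ! Suc i) \<in> E))"

definition path_bounded :: "nat \<Rightarrow> ('v, 's) sgraph \<Rightarrow> bool" where
  "path_bounded k G \<longleftrightarrow> (\<forall>xs. simple_path G xs \<longrightarrow> length xs - 1 \<le> k)"

end

theory Submission
  imports Defs "HOL-Library.Sublist" "HOL-Library.Ramsey"
begin

text \<open>A graph whose simple paths have length at most \<open>k\<close> has a normal spanning forest: sibling
  subtrees are separated, so every edge joins an ancestor to a descendant, and every vertex is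
  adjacent to its parent. Its branches are then paths, so the forest has height at most \<open>k + 1\<close>.
  Labelling each vertex by its \<open>S\<close>-label together with the set of depths of its adjacent
  ancestors encodes the graph as a forest of height at most \<open>k + 1\<close> over the well-quasi-order
  \<open>S \<times> Pow {..<k}\<close> (second component ordered by equality), and an embedding of encodings,
  mapping roots to roots and the children of a vertex injectively into the children of its
  image, is an induced labelled subgraph embedding. Forests of bounded height over a
  well-quasi-order are well-quasi-ordered by iterating Higman's lemma.\<close>

section \<open>Almost-full relations and Higman's lemma\<close>

definition almost_full_on :: "('a \<Rightarrow> 'a \<Rightarrow> bool) \<Rightarrow> 'a set \<Rightarrow> bool" where
  "almost_full_on P A \<longleftrightarrow> (\<forall>f :: nat \<Rightarrow> 'a. (\<forall>i. f i \<in> A) \<longrightarrow> (\<exists>i j. i < j \<and> P (f i) (f j)))"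

lemma wqo_on_iff: "wqo_on P A \<longleftrightarrow> reflp_on A P \<and> transp_on A P \<and> almost_full_on P A"
  by (simp add: wqo_on_def reflp_on_def transp_on_def almost_full_on_def)

lemma almost_full_onD:
  fixes f :: "nat \<Rightarrow> 'a"
  assumes "almost_full_on P A" and "\<And>i. f i \<in> A"
  shows "\<exists>i j. i < j \<and> P (f i) (f j)"
  using assms unfolding almost_full_on_def by blast

lemma almost_full_onI:
  "(\<And>f :: nat \<Rightarrow> 'a. (\<And>i. f i \<in> A) \<Longrightarrow> \<exists>i j. i < j \<and> P (f i) (f j)) \<Longrightarrow> almost_full_on P A"
  unfolding almost_full_on_def by blast

lemma almost_full_on_map:
  assumes "almost_full_on Q B" and "f ` A \<subseteq> B"
    and "\<And>x y. x \<in> A \<Longrightarrow> y \<in> A \<Longrightarrow> Q (f x) (f y) \<Longrightarrow> P x y"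
  shows "almost_full_on P A"
proof (rule almost_full_onI)
  fix g :: "nat \<Rightarrow> _" assume g: "\<And>i. g i \<in> A"
  then have "f (g i) \<in> B" for i using assms(2) by auto
  from almost_full_onD[OF assms(1) this] obtain i j where "i < j" "Q (f (g i)) (f (g j))" by blast
  then show "\<exists>i j. i < j \<and> P (g i) (g j)" using assms(3)[OF g g] by blast
qed

lemma almost_full_on_finite:
  assumes "finite A" and "reflp_on A P"
  shows "almost_full_on P A"
proof (rule almost_full_onI)
  fix f :: "nat \<Rightarrow> 'a" assume f: "\<And>i. f i \<in> A"
  then have "finite (range f)" using assms(1) by (meson finite_subset image_subsetI)
  then have "\<not> inj f" using finite_imageD infinite_UNIV_nat by blast
  then obtain i j where "i \<noteq> j" "f i = f j" unfolding inj_def by blast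
  then have "i < j \<and> P (f i) (f j) \<or> j < i \<and> P (f j) (f i)"
    using f assms(2) by (auto simp: reflp_on_def)
  then show "\<exists>i j. i < j \<and> P (f i) (f j)" by blast
qed

text \<open>By Ramsey's theorem, colouring a pair \<open>i < j\<close> by whether \<open>P (f i) (f j)\<close> holds.\<close>
lemma almost_full_on_ascending_subseq:
  assumes af: "almost_full_on P A" and f: "\<And>i. f i \<in> A"
  shows "\<exists>\<phi> :: nat \<Rightarrow> nat. strict_mono \<phi> \<and> (\<forall>i j. i < j \<longrightarrow> P (f (\<phi> i)) (f (\<phi> j)))"
proof -
  define c where "c X = (if P (f (Min X)) (f (Max X)) then 0 else (1::nat))" for X :: "nat set"
  have "\<forall>x\<in>(UNIV::nat set). \<forall>y\<in>UNIV. x \<noteq> y \<longrightarrow> c {x, y} < 2" by (simp add: c_def)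
  from Ramsey2[OF infinite_UNIV_nat this] obtain Y t where
    Y: "infinite Y" "\<forall>x\<in>Y. \<forall>y\<in>Y. x \<noteq> y \<longrightarrow> c {x, y} = t" by blast
  define e where "e = enumerate Y"
  have e: "strict_mono e" "\<And>i. e i \<in> Y"
    using Y(1) by (simp_all add: e_def strict_mono_enumerate enumerate_in_set)
  have c_e: "c {e i, e j} = t" if "i < j" for i j
  proof -
    have "e i \<noteq> e j" using strict_monoD[OF e(1) that] by simp
    then show ?thesis using Y(2) e(2) by blast
  qed
  have min_max: "Min {e i, e j} = e i" "Max {e i, e j} = e j" if "i < j" for i j
    using strict_monoD[OF e(1) that] by simp_all
  obtain i j where "i < j" "P (f (e i)) (f (e j))"
    using almost_full_onD[OF af, of "\<lambda>i. f (e i)"] f by blast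
  then have "t = 0" using c_e[of i j] min_max[of i j] by (simp add: c_def)
  then have "P (f (e i)) (f (e j))" if "i < j" for i j
    using c_e[OF that] min_max[OF that] by (simp add: c_def split: if_splits)
  with e(1) show ?thesis by blast
qed

definition prod_le :: "('a \<Rightarrow> 'a \<Rightarrow> bool) \<Rightarrow> ('b \<Rightarrow> 'b \<Rightarrow> bool) \<Rightarrow> 'a \<times> 'b \<Rightarrow> 'a \<times> 'b \<Rightarrow> bool" where
  "prod_le P Q x y \<longleftrightarrow> P (fst x) (fst y) \<and> Q (snd x) (snd y)"

lemma almost_full_on_prod:
  assumes "almost_full_on P A" and "almost_full_on Q B"
  shows "almost_full_on (prod_le P Q) (A \<times> B)"
proof (rule almost_full_onI)
  fix f :: "nat \<Rightarrow> _" assume f: "\<And>i. f i \<in> A \<times> B"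
  then have "fst (f i) \<in> A" for i by (simp add: mem_Times_iff)
  then have "\<exists>\<phi> :: nat \<Rightarrow> nat. strict_mono \<phi> \<and> (\<forall>i j. i < j \<longrightarrow> P (fst (f (\<phi> i))) (fst (f (\<phi> j))))"
    by (rule almost_full_on_ascending_subseq[OF assms(1)])
  then obtain \<phi> :: "nat \<Rightarrow> nat"
    where \<phi>: "strict_mono \<phi>" "\<forall>i j. i < j \<longrightarrow> P (fst (f (\<phi> i))) (fst (f (\<phi> j)))"
    by blast
  have "snd (f (\<phi> i)) \<in> B" for i using f by (simp add: mem_Times_iff)
  from almost_full_onD[OF assms(2) this] obtain i j
    where "i < j" "Q (snd (f (\<phi> i))) (snd (f (\<phi> j)))" by blast
  then show "\<exists>i j. i < j \<and> prod_le P Q (f i) (f j)"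
    using \<phi> by (intro exI[of _ "\<phi> i"] exI[of _ "\<phi> j"]) (simp add: prod_le_def strict_mono_less)
qed

lemma minimal_bad_seq:
  fixes size :: "'a \<Rightarrow> nat" and bad :: "(nat \<Rightarrow> 'a) \<Rightarrow> bool"
  assumes "bad f"
  obtains m where "\<And>n. \<exists>g. bad g \<and> (\<forall>i<n. g i = m i)"
    and "\<And>g n. bad g \<Longrightarrow> \<forall>i<n. g i = m i \<Longrightarrow> size (m n) \<le> size (g n)"
proof -
  define extendable where "extendable p \<longleftrightarrow> (\<exists>g. bad g \<and> (\<forall>i<length p. g i = p ! i))" for p
  define next_elem where "next_elem p = (ARG_MIN size x. extendable (p @ [x]))" for p
  define prefix where "prefix n = ((\<lambda>p. p @ [next_elem p]) ^^ n) []" for n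
  define m where "m n = next_elem (prefix n)" for n
  have prefix_0: "prefix 0 = []" and prefix_Suc: "prefix (Suc n) = prefix n @ [m n]" for n
    by (simp_all add: prefix_def m_def)
  have length_prefix: "length (prefix n) = n" for n
    by (induct n) (simp_all add: prefix_0 prefix_Suc)
  have nth_prefix: "i < n \<Longrightarrow> prefix n ! i = m i" for i n
    by (induct n) (auto simp: prefix_Suc nth_append length_prefix less_Suc_eq)
  have extendable_snoc: "extendable (p @ [g (length p)])"
    if "bad g" "\<forall>i<length p. g i = p ! i" for g p
    using that by (auto simp: extendable_def nth_append less_Suc_eq intro!: exI[of _ g])
  have extendable_prefix: "extendable (prefix n)" for n
  proof (induct n)
    case 0
    show ?case using assms by (auto simp: extendable_def prefix_0)
  next
    case (Suc n)
    then obtain g where "bad g" "\<forall>i<length (prefix n). g i = prefix n ! i"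
      unfolding extendable_def by blast
    then have "extendable (prefix n @ [g (length (prefix n))])" by (rule extendable_snoc)
    then show ?case unfolding prefix_Suc m_def next_elem_def by (rule arg_min_natI)
  qed
  show thesis
  proof
    fix n
    show "\<exists>g. bad g \<and> (\<forall>i<n. g i = m i)"
      using extendable_prefix[of n] by (simp add: extendable_def length_prefix nth_prefix)
  next
    fix g n assume "bad g" "\<forall>i<n. g i = m i"
    then have "extendable (prefix n @ [g (length (prefix n))])"
      by (intro extendable_snoc) (simp_all add: length_prefix nth_prefix)
    then show "size (m n) \<le> size (g n)"
      unfolding m_def next_elem_def length_prefix by (rule arg_min_nat_le)
  qed
qed

lemma almost_full_on_lists:
  assumes af: "almost_full_on P A"
  shows "almost_full_on (list_emb P) (lists A)"
proof (rule ccontr)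
  define bad where "bad f \<longleftrightarrow> (\<forall>i. f i \<in> lists A) \<and> (\<forall>i j. i < j \<longrightarrow> \<not> list_emb P (f i) (f j))"
    for f :: "nat \<Rightarrow> 'a list"
  assume "\<not> almost_full_on (list_emb P) (lists A)"
  then obtain f where "bad f" unfolding almost_full_on_def bad_def by blast
  then obtain m where m_prefix: "\<And>n. \<exists>g. bad g \<and> (\<forall>i<n. g i = m i)"
    and m_min: "\<And>g n. bad g \<Longrightarrow> \<forall>i<n. g i = m i \<Longrightarrow> length (m n) \<le> length (g n)"
    by (rule minimal_bad_seq[where bad = bad and size = length]) blast
  have m_lists: "m i \<in> lists A" for i
    using m_prefix[of "Suc i"] unfolding bad_def by (metis lessI)
  have m_bad: "\<not> list_emb P (m i) (m j)" if "i < j" for i j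
    using m_prefix[of "Suc j"] that unfolding bad_def by (metis less_Suc_eq)
  have m_ne: "m i \<noteq> []" for i
    using m_bad[of i "Suc i"] by auto
  have m_Cons: "m i = hd (m i) # tl (m i)" for i
    using m_ne[of i] by simp
  have "hd (m i) \<in> A" for i using m_lists[of i] by (subst (asm) m_Cons) simp
  then have "\<exists>\<phi> :: nat \<Rightarrow> nat. strict_mono \<phi> \<and> (\<forall>i j. i < j \<longrightarrow> P (hd (m (\<phi> i))) (hd (m (\<phi> j))))"
    by (rule almost_full_on_ascending_subseq[OF af])
  then obtain \<phi> :: "nat \<Rightarrow> nat"
    where \<phi>: "strict_mono \<phi>" "\<forall>i j. i < j \<longrightarrow> P (hd (m (\<phi> i))) (hd (m (\<phi> j)))" by blast
  txt \<open>Keeping \<open>m\<close> below \<open>\<phi> 0\<close> and continuing with the tails of \<open>m \<circ> \<phi>\<close> gives a bad sequence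
    that is shorter than \<open>m\<close> at \<open>\<phi> 0\<close>.\<close>
  define g where "g n = (if n < \<phi> 0 then m n else tl (m (\<phi> (n - \<phi> 0))))" for n
  have g_emb: "\<exists>i' j'. i' < j' \<and> list_emb P (m i') (m j')"
    if "i < j" "list_emb P (g i) (g j)" for i j
  proof -
    have \<phi>_ge: "\<phi> 0 \<le> \<phi> n" for n using \<phi>(1) by (simp add: strict_mono_less_eq)
    consider "j < \<phi> 0" | "i < \<phi> 0" "\<phi> 0 \<le> j" | "\<phi> 0 \<le> i" using \<open>i < j\<close> by linarith
    then show ?thesis
    proof cases
      case 1
      then show ?thesis using that by (auto simp: g_def)
    next
      case 2
      then have "list_emb P (m i) (tl (m (\<phi> (j - \<phi> 0))))" using that(2) by (simp add: g_def)
      then have "list_emb P (m i) (m (\<phi> (j - \<phi> 0)))" by (subst m_Cons) (rule list_emb_Cons)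
      moreover have "i < \<phi> (j - \<phi> 0)" using 2 \<phi>_ge[of "j - \<phi> 0"] by simp
      ultimately show ?thesis by blast
    next
      case 3
      then have "list_emb P (tl (m (\<phi> (i - \<phi> 0)))) (tl (m (\<phi> (j - \<phi> 0))))"
        using that by (simp add: g_def)
      moreover have "P (hd (m (\<phi> (i - \<phi> 0)))) (hd (m (\<phi> (j - \<phi> 0))))"
        using \<phi>(2) 3 that(1) by simp
      ultimately have "list_emb P (m (\<phi> (i - \<phi> 0))) (m (\<phi> (j - \<phi> 0)))"
        by (subst (1 2) m_Cons) (rule list_emb_Cons2)
      moreover have "\<phi> (i - \<phi> 0) < \<phi> (j - \<phi> 0)" using \<phi>(1) 3 that(1) by (simp add: strict_mono_less)
      ultimately show ?thesis by blast
    qed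
  qed
  have "bad g"
    unfolding bad_def
  proof (intro conjI allI impI notI)
    fix i show "g i \<in> lists A" using m_lists m_Cons by (simp add: g_def) (metis Cons_in_lists_iff)
  next
    fix i j assume "i < j" "list_emb P (g i) (g j)"
    then show False using g_emb m_bad by blast
  qed
  then have "length (m (\<phi> 0)) \<le> length (g (\<phi> 0))" by (rule m_min) (simp add: g_def)
  then show False using m_ne[of "\<phi> 0"] by (cases "m (\<phi> 0)") (simp_all add: g_def)
qed

lemma list_emb_map:
  "list_emb P (map f xs) (map g ys) \<longleftrightarrow> list_emb (\<lambda>x y. P (f x) (g y)) xs ys"
proof (induct ys arbitrary: xs)
  case Nil
  then show ?case by (cases xs) auto
next
  case (Cons y ys)
  show ?case
  proof (cases xs)
    case (Cons x xs')
    then show ?thesis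
      using Cons.hyps[of "x # xs'"] Cons.hyps[of xs'] by (cases "P (f x) (g y)") simp_all
  qed simp
qed

section \<open>Trees of bounded height\<close>

datatype 'a tree = Node (root: 'a) (kids: "'a tree list")

inductive tree_emb :: "('a \<Rightarrow> 'a \<Rightarrow> bool) \<Rightarrow> 'a tree \<Rightarrow> 'a tree \<Rightarrow> bool" for P where
  "P a b \<Longrightarrow> list_emb (tree_emb P) ts us \<Longrightarrow> tree_emb P (Node a ts) (Node b us)"
monos list_emb_mono

lemma tree_emb_Node_iff:
  "tree_emb P (Node a ts) (Node b us) \<longleftrightarrow> P a b \<and> list_emb (tree_emb P) ts us"
  by (auto elim: tree_emb.cases intro: tree_emb.intros)

fun bounded_trees :: "'a set \<Rightarrow> nat \<Rightarrow> 'a tree set" where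
  "bounded_trees A 0 = {}"
| "bounded_trees A (Suc h) = {Node a ts | a ts. a \<in> A \<and> ts \<in> lists (bounded_trees A h)}"

lemma almost_full_on_bounded_trees:
  assumes "almost_full_on P A"
  shows "almost_full_on (tree_emb P) (bounded_trees A h)"
proof (induct h)
  case 0
  show ?case by (rule almost_full_onI) simp
next
  case (Suc h)
  have "almost_full_on (prod_le P (list_emb (tree_emb P))) (A \<times> lists (bounded_trees A h))"
    using assms Suc by (intro almost_full_on_prod almost_full_on_lists)
  then show ?case
    by (rule almost_full_on_map[where f = "\<lambda>t. (root t, kids t)"])
      (auto simp: prod_le_def tree_emb_Node_iff)
qed

section \<open>Normal forests and their annotated embeddings\<close>

primrec tree_verts :: "'v tree \<Rightarrow> 'v set" where
  "tree_verts (Node v ts) = insert v (\<Union> (set (map tree_verts ts)))"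

definition forest_verts :: "'v tree list \<Rightarrow> 'v set" where
  "forest_verts ts = (\<Union>t\<in>set ts. tree_verts t)"

lemma tree_verts_Node [simp]: "tree_verts (Node v ts) = insert v (forest_verts ts)"
  by (simp add: forest_verts_def)

declare tree_verts.simps [simp del]

lemma forest_verts_simps [simp]:
  "forest_verts [] = {}"
  "forest_verts (t # ts) = tree_verts t \<union> forest_verts ts"
  by (simp_all add: forest_verts_def)

lemma root_in_tree_verts: "root t \<in> tree_verts t"
  by (cases t) simp

definition separated :: "('v \<times> 'v) set \<Rightarrow> 'v set \<Rightarrow> 'v set \<Rightarrow> bool" where
  "separated E X Y \<longleftrightarrow> X \<inter> Y = {} \<and> (\<forall>x\<in>X. \<forall>y\<in>Y. (x, y) \<notin> E \<and> (y, x) \<notin> E)"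

fun siblings_separated :: "('v \<times> 'v) set \<Rightarrow> 'v tree list \<Rightarrow> bool" where
  "siblings_separated E [] = True"
| "siblings_separated E (t # ts) \<longleftrightarrow>
     separated E (tree_verts t) (forest_verts ts) \<and> siblings_separated E ts"

text \<open>In a normal tree the vertices are distinct and every edge joins an ancestor to a descendant.\<close>
primrec normal_tree :: "('v \<times> 'v) set \<Rightarrow> 'v tree \<Rightarrow> bool" where
  "normal_tree E (Node v ts) \<longleftrightarrow>
     v \<notin> forest_verts ts \<and> siblings_separated E ts \<and> list_all id (map (normal_tree E) ts)"

definition normal_forest :: "('v \<times> 'v) set \<Rightarrow> 'v tree list \<Rightarrow> bool" where
  "normal_forest E ts \<longleftrightarrow> siblings_separated E ts \<and> (\<forall>t\<in>set ts. normal_tree E t)"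

lemma normal_tree_Node [simp]:
  "normal_tree E (Node v ts) \<longleftrightarrow> v \<notin> forest_verts ts \<and> normal_forest E ts"
  by (simp add: normal_forest_def list_all_iff)

declare normal_tree.simps [simp del]

lemma normal_forest_simps [simp]:
  "normal_forest E []"
  "normal_forest E (t # ts) \<longleftrightarrow>
     normal_tree E t \<and> separated E (tree_verts t) (forest_verts ts) \<and> normal_forest E ts"
  by (auto simp: normal_forest_def)

primrec annotate :: "('v \<times> 'v) set \<Rightarrow> ('v \<Rightarrow> 's) \<Rightarrow> 'v list \<Rightarrow> 'v tree \<Rightarrow> ('s \<times> nat set) tree" where
  "annotate E L anc (Node v ts) =
     Node (L v, {i. i < length anc \<and> (anc ! i, v) \<in> E}) (map (annotate E L (anc @ [v])) ts)"

locale graph_pair =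
  fixes E1 E2 :: "('v \<times> 'v) set" and L1 L2 :: "'v \<Rightarrow> 's" and le :: "'s \<Rightarrow> 's \<Rightarrow> bool"
  assumes sym1: "(x, y) \<in> E1 \<Longrightarrow> (y, x) \<in> E1" and sym2: "(x, y) \<in> E2 \<Longrightarrow> (y, x) \<in> E2"
    and irrefl1: "(x, x) \<notin> E1" and irrefl2: "(x, x) \<notin> E2"
begin

definition anc_emb :: "'v list \<Rightarrow> 'v list \<Rightarrow> 'v set \<Rightarrow> 'v set \<Rightarrow> ('v \<Rightarrow> 'v) \<Rightarrow> bool" where
  "anc_emb a1 a2 X Y h \<longleftrightarrow> inj_on h X \<and> h ` X \<subseteq> Y \<and> (\<forall>x\<in>X. le (L1 x) (L2 (h x))) \<and>
     (\<forall>x\<in>X. \<forall>i<length a1. (a1 ! i, x) \<in> E1 \<longleftrightarrow> (a2 ! i, h x) \<in> E2) \<and>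
     (\<forall>x\<in>X. \<forall>y\<in>X. (x, y) \<in> E1 \<longleftrightarrow> (h x, h y) \<in> E2)"

lemma anc_emb_empty: "anc_emb a1 a2 {} Y h"
  by (simp add: anc_emb_def)

lemma anc_emb_mono: "anc_emb a1 a2 X Y h \<Longrightarrow> Y \<subseteq> Y' \<Longrightarrow> anc_emb a1 a2 X Y' h"
  by (auto simp: anc_emb_def)

lemma anc_emb_Un:
  assumes "anc_emb a1 a2 X1 Y1 h1" and "anc_emb a1 a2 X2 Y2 h2"
    and "separated E1 X1 X2" and "separated E2 Y1 Y2"
  shows "anc_emb a1 a2 (X1 \<union> X2) (Y1 \<union> Y2) (\<lambda>x. if x \<in> X1 then h1 x else h2 x)"
proof -
  let ?h = "\<lambda>x. if x \<in> X1 then h1 x else h2 x"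
  have disj: "X1 \<inter> X2 = {}" "Y1 \<inter> Y2 = {}" using assms(3,4) by (simp_all add: separated_def)
  have img: "h1 ` X1 \<subseteq> Y1" "h2 ` X2 \<subseteq> Y2" using assms(1,2) by (simp_all add: anc_emb_def)
  have on_X1: "?h x = h1 x" if "x \<in> X1" for x using that by simp
  have on_X2: "?h x = h2 x" if "x \<in> X2" for x using that disj(1) by auto
  have "inj_on ?h (X1 \<union> X2)"
    unfolding inj_on_Un
  proof (intro conjI)
    have "inj_on ?h X1 \<longleftrightarrow> inj_on h1 X1" by (rule inj_on_cong) simp
    then show "inj_on ?h X1" using assms(1) by (simp add: anc_emb_def)
    have "inj_on ?h X2 \<longleftrightarrow> inj_on h2 X2" by (rule inj_on_cong) (rule on_X2)
    then show "inj_on ?h X2" using assms(2) by (simp add: anc_emb_def)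
    show "?h ` (X1 - X2) \<inter> ?h ` (X2 - X1) = {}" using img disj(2) on_X2 by auto
  qed
  moreover have "?h ` (X1 \<union> X2) \<subseteq> Y1 \<union> Y2" using img on_X2 by auto
  moreover have "\<forall>x\<in>X1 \<union> X2. le (L1 x) (L2 (?h x))
      \<and> (\<forall>i<length a1. (a1 ! i, x) \<in> E1 \<longleftrightarrow> (a2 ! i, ?h x) \<in> E2)"
    using assms(1,2) on_X2 by (auto simp: anc_emb_def)
  moreover have "(x, y) \<in> E1 \<longleftrightarrow> (?h x, ?h y) \<in> E2" if "x \<in> X1 \<union> X2" "y \<in> X1 \<union> X2" for x y
  proof -
    have "h1 x \<in> Y1" "h2 y \<in> Y2" if "x \<in> X1" "y \<in> X2" for x y using img that by auto
    then show ?thesis using that assms on_X2 unfolding anc_emb_def separated_def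
      by (cases "x \<in> X1"; cases "y \<in> X1") auto
  qed
  ultimately show ?thesis unfolding anc_emb_def by blast
qed

lemma anc_emb_insert:
  assumes h: "anc_emb (a1 @ [v]) (a2 @ [w]) X Y h" and "v \<notin> X" and "w \<notin> Y"
    and len: "length a1 = length a2" and "le (L1 v) (L2 w)"
    and anc_v: "\<forall>i<length a1. (a1 ! i, v) \<in> E1 \<longleftrightarrow> (a2 ! i, w) \<in> E2"
  shows "anc_emb a1 a2 (insert v X) (insert w Y) (h(v := w))"
proof -
  let ?h = "h(v := w)"
  have on_X: "?h x = h x" if "x \<in> X" for x using that \<open>v \<notin> X\<close> by auto
  have img: "h ` X \<subseteq> Y" and edges: "\<forall>x\<in>X. \<forall>y\<in>X. (x, y) \<in> E1 \<longleftrightarrow> (h x, h y) \<in> E2"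
    using h by (simp_all add: anc_emb_def)
  have anc: "(a1 ! i, x) \<in> E1 \<longleftrightarrow> (a2 ! i, h x) \<in> E2" if "x \<in> X" "i < length a1" for x i
  proof -
    have "((a1 @ [v]) ! i, x) \<in> E1 \<longleftrightarrow> ((a2 @ [w]) ! i, h x) \<in> E2"
      using h that by (simp add: anc_emb_def)
    then show ?thesis using that(2) len by (simp add: nth_append)
  qed
  txt \<open>\<open>v\<close> and \<open>w\<close> are the last ancestors, at depth \<open>length a1\<close>.\<close>
  have adj_v: "(v, x) \<in> E1 \<longleftrightarrow> (w, h x) \<in> E2" if "x \<in> X" for x
    using h that len unfolding anc_emb_def
    by (metis length_append_singleton lessI nth_append_length)
  have "inj_on ?h (insert v X)"
    using h img \<open>v \<notin> X\<close> \<open>w \<notin> Y\<close> by (auto simp: anc_emb_def inj_on_def)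
  moreover have "?h ` insert v X \<subseteq> insert w Y" using img on_X by auto
  moreover have "\<forall>x\<in>insert v X. le (L1 x) (L2 (?h x))"
    using h \<open>le (L1 v) (L2 w)\<close> on_X by (auto simp: anc_emb_def)
  moreover have "\<forall>x\<in>insert v X. \<forall>i<length a1. (a1 ! i, x) \<in> E1 \<longleftrightarrow> (a2 ! i, ?h x) \<in> E2"
    using anc anc_v on_X by auto
  moreover have "(x, y) \<in> E1 \<longleftrightarrow> (?h x, ?h y) \<in> E2" if "x \<in> insert v X" "y \<in> insert v X" for x y
  proof -
    have from_v: "(v, z) \<in> E1 \<longleftrightarrow> (w, ?h z) \<in> E2" if "z \<in> insert v X" for z
      using that adj_v on_X irrefl1 irrefl2 by auto
    moreover have "(z, v) \<in> E1 \<longleftrightarrow> (?h z, w) \<in> E2" if "z \<in> insert v X" for z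
      using from_v[OF that] sym1 sym2 by blast
    ultimately show ?thesis using that edges on_X by (cases "x = v"; cases "y = v") auto
  qed
  ultimately show ?thesis unfolding anc_emb_def by blast
qed

lemma forest_emb_imp_anc_emb:
  assumes "list_emb Q ts us"
    and "\<And>t u. t \<in> set ts \<Longrightarrow> u \<in> set us \<Longrightarrow> Q t u \<Longrightarrow> \<exists>h. anc_emb a1 a2 (tree_verts t) (tree_verts u) h"
    and "normal_forest E1 ts" and "normal_forest E2 us"
  shows "\<exists>h. anc_emb a1 a2 (forest_verts ts) (forest_verts us) h"
  using assms
proof induct
  case (list_emb_Nil us)
  show ?case using anc_emb_empty by simp
next
  case (list_emb_Cons ts us u)
  then obtain h where "anc_emb a1 a2 (forest_verts ts) (forest_verts us) h" by auto
  then have "anc_emb a1 a2 (forest_verts ts) (forest_verts (u # us)) h" by (rule anc_emb_mono) auto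
  then show ?case by blast
next
  case (list_emb_Cons2 t u ts us)
  then obtain h1 where "anc_emb a1 a2 (tree_verts t) (tree_verts u) h1" by auto
  have "\<And>t' u'. t' \<in> set ts \<Longrightarrow> u' \<in> set us \<Longrightarrow> Q t' u' \<Longrightarrow>
      \<exists>h. anc_emb a1 a2 (tree_verts t') (tree_verts u') h"
    using list_emb_Cons2.prems(1) by simp
  from list_emb_Cons2.hyps(3)[OF this] list_emb_Cons2.prems(2,3)
  obtain h2 where "anc_emb a1 a2 (forest_verts ts) (forest_verts us) h2" by auto
  moreover note \<open>anc_emb a1 a2 (tree_verts t) (tree_verts u) h1\<close>
  moreover have "separated E1 (tree_verts t) (forest_verts ts)"
    and "separated E2 (tree_verts u) (forest_verts us)" using list_emb_Cons2.prems by simp_all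
  ultimately show ?case by (auto dest: anc_emb_Un)
qed

lemma annotated_tree_emb_imp_anc_emb:
  assumes "tree_emb (prod_le le (=)) (annotate E1 L1 a1 t) (annotate E2 L2 a2 u)"
    and "length a1 = length a2" and "normal_tree E1 t" and "normal_tree E2 u"
  shows "\<exists>h. anc_emb a1 a2 (tree_verts t) (tree_verts u) h"
  using assms
proof (induct t arbitrary: u a1 a2)
  case (Node v ts)
  obtain w us where u: "u = Node w us" by (cases u)
  have "prod_le le (=) (L1 v, {i. i < length a1 \<and> (a1 ! i, v) \<in> E1})
      (L2 w, {i. i < length a2 \<and> (a2 ! i, w) \<in> E2})"
    and kids: "list_emb (\<lambda>t u. tree_emb (prod_le le (=))
                 (annotate E1 L1 (a1 @ [v]) t) (annotate E2 L2 (a2 @ [w]) u)) ts us"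
    using Node.prems(1) by (simp_all add: u tree_emb_Node_iff list_emb_map)
  then have "le (L1 v) (L2 w)"
    and anc_v: "{i. i < length a1 \<and> (a1 ! i, v) \<in> E1} = {i. i < length a2 \<and> (a2 ! i, w) \<in> E2}"
    by (simp_all add: prod_le_def)
  have normal: "v \<notin> forest_verts ts" "normal_forest E1 ts"
    "w \<notin> forest_verts us" "normal_forest E2 us"
    using Node.prems(3,4) u by simp_all
  have "\<exists>h. anc_emb (a1 @ [v]) (a2 @ [w]) (forest_verts ts) (forest_verts us) h"
  proof (rule forest_emb_imp_anc_emb[OF kids _ normal(2,4)])
    fix t' u' assume t': "t' \<in> set ts" and u': "u' \<in> set us"
      and "tree_emb (prod_le le (=)) (annotate E1 L1 (a1 @ [v]) t') (annotate E2 L2 (a2 @ [w]) u')"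
    moreover have "normal_tree E1 t'" "normal_tree E2 u'"
      using t' u' normal(2,4) by (simp_all add: normal_forest_def)
    ultimately show "\<exists>h. anc_emb (a1 @ [v]) (a2 @ [w]) (tree_verts t') (tree_verts u') h"
      using Node.hyps[OF t'] Node.prems(2) by simp
  qed
  then obtain h where "anc_emb (a1 @ [v]) (a2 @ [w]) (forest_verts ts) (forest_verts us) h" ..
  then have "anc_emb a1 a2 (insert v (forest_verts ts)) (insert w (forest_verts us)) (h(v := w))"
    using normal(1,3) Node.prems(2) \<open>le (L1 v) (L2 w)\<close> anc_v
    by (intro anc_emb_insert) (auto simp: set_eq_iff)
  then show ?case using u by auto
qed

end

section \<open>Normal spanning forests of path-bounded graphs\<close>

primrec parent_adjacent :: "('v \<times> 'v) set \<Rightarrow> 'v tree \<Rightarrow> bool" where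
  "parent_adjacent E (Node v ts) \<longleftrightarrow>
     list_all id (map (\<lambda>t. (v, root t) \<in> E) ts) \<and> list_all id (map (parent_adjacent E) ts)"

lemma parent_adjacent_Node [simp]:
  "parent_adjacent E (Node v ts) \<longleftrightarrow> (\<forall>t\<in>set ts. (v, root t) \<in> E \<and> parent_adjacent E t)"
  by (auto simp: list_all_iff)

declare parent_adjacent.simps [simp del]

lemma rtrancl_stays_or_exits:
  assumes "(x, y) \<in> R\<^sup>*" and "x \<in> U"
  shows "(x, y) \<in> (Restr R U)\<^sup>* \<and> y \<in> U \<or>
    (\<exists>a b. (x, a) \<in> (Restr R U)\<^sup>* \<and> a \<in> U \<and> (a, b) \<in> R \<and> b \<notin> U)"
  using assms
proof (induct rule: converse_rtrancl_induct)
  case base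
  then show ?case by simp
next
  case (step x z)
  show ?case
  proof (cases "z \<in> U")
    case True
    then have "(x, z) \<in> Restr R U" using step by simp
    with step.hyps(3)[OF True] show ?thesis by (meson converse_rtrancl_into_rtrancl)
  next
    case False
    then show ?thesis using step by blast
  qed
qed

lemma rtrancl_avoids_component:
  fixes E :: "('v \<times> 'v) set" and W :: "'v set" and r :: 'v
  defines "C \<equiv> (Restr E W)\<^sup>* `` {r}"
  assumes sym: "\<And>a b. (a, b) \<in> E \<Longrightarrow> (b, a) \<in> E"
    and "(x, y) \<in> (Restr E W)\<^sup>*" and "x \<in> W - C"
  shows "(x, y) \<in> (Restr E (W - C))\<^sup>* \<and> y \<in> W - C"
proof -
  have no_exit: False if "a \<in> W - C" "(a, b) \<in> Restr E W" "b \<notin> W - C" for a b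
  proof -
    have "(b, a) \<in> Restr E W" using that(2) sym by blast
    moreover have "b \<in> C" using that(2,3) by blast
    ultimately have "a \<in> C" unfolding C_def by (auto intro: rtrancl_into_rtrancl)
    then show False using that(1) by blast
  qed
  have "Restr (Restr E W) (W - C) = Restr E (W - C)" by blast
  then show ?thesis using rtrancl_stays_or_exits[OF assms(3,4)] no_exit by metis
qed

lemma component_reaches_root_neighbour:
  fixes E :: "('v \<times> 'v) set" and W :: "'v set" and r :: 'v
  defines "C \<equiv> (Restr E W)\<^sup>* `` {r}"
  assumes sym: "\<And>a b. (a, b) \<in> E \<Longrightarrow> (b, a) \<in> E" and "x \<in> C - {r}"
  shows "\<exists>a \<in> C - {r}. (r, a) \<in> E \<and> (x, a) \<in> (Restr E (C - {r}))\<^sup>*"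
proof -
  let ?rel = "Restr E W"
  have "converse ?rel = ?rel" using sym by blast
  moreover have "(r, x) \<in> ?rel\<^sup>*" using assms(3) by (simp add: C_def)
  ultimately have "(x, r) \<in> ?rel\<^sup>*" by (metis rtrancl_converseI)
  from rtrancl_stays_or_exits[OF this assms(3)] obtain a b
    where a: "(x, a) \<in> (Restr ?rel (C - {r}))\<^sup>*" "a \<in> C - {r}"
      and "(a, b) \<in> ?rel" "b \<notin> C - {r}" by blast
  moreover from this have "b \<in> C" unfolding C_def by (auto intro: rtrancl_into_rtrancl)
  ultimately have "(r, a) \<in> E" using sym by blast
  moreover have "Restr ?rel (C - {r}) = Restr E (C - {r})"
    unfolding C_def by (auto elim: rtranclE)
  ultimately show ?thesis using a by auto
qed

text \<open>The tree rooted at \<open>r\<close> spans the component \<open>C\<close> of \<open>r\<close>; its subtrees are built recursively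
  on \<open>C - {r}\<close> with roots adjacent to \<open>r\<close>, and the rest of the forest on \<open>W - C\<close>.\<close>
lemma normal_forest_exists:
  assumes sym: "\<And>a b. (a, b) \<in> E \<Longrightarrow> (b, a) \<in> E"
    and "finite W" and "\<forall>x\<in>W. \<exists>y\<in>R \<inter> W. (x, y) \<in> (Restr E W)\<^sup>*"
  shows "\<exists>F. normal_forest E F \<and> forest_verts F = W \<and> (\<forall>t\<in>set F. root t \<in> R \<and> parent_adjacent E t)"
  using assms(2,3)
proof (induct "card W" arbitrary: W R rule: less_induct)
  case less
  show ?case
  proof (cases "W = {}")
    case True
    then show ?thesis by (intro exI[of _ "[]"]) simp
  next
    case False
    then obtain r where r: "r \<in> R" "r \<in> W" using less.prems(2) by blast
    define C where "C = (Restr E W)\<^sup>* `` {r}"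
    have C: "r \<in> C" "C \<subseteq> W" using r(2) by (auto simp: C_def elim: rtranclE)
    have "\<forall>x\<in>W - C. \<exists>y\<in>R \<inter> (W - C). (x, y) \<in> (Restr E (W - C))\<^sup>*"
    proof
      fix x assume x: "x \<in> W - C"
      then obtain y where "y \<in> R" "(x, y) \<in> (Restr E W)\<^sup>*" using less.prems(2) by blast
      with rtrancl_avoids_component[OF sym this(2)] x
      show "\<exists>y\<in>R \<inter> (W - C). (x, y) \<in> (Restr E (W - C))\<^sup>*" unfolding C_def by blast
    qed
    moreover have "card (W - C) < card W" using less.prems(1) C by (auto intro!: psubset_card_mono)
    ultimately obtain F2 where F2: "normal_forest E F2" "forest_verts F2 = W - C"
      "\<forall>t\<in>set F2. root t \<in> R \<and> parent_adjacent E t"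
      using less.hyps[OF _ finite_Diff[OF less.prems(1)]] by blast
    have "\<forall>x\<in>C - {r}. \<exists>y\<in>{y. (r, y) \<in> E} \<inter> (C - {r}). (x, y) \<in> (Restr E (C - {r}))\<^sup>*"
      using component_reaches_root_neighbour[OF sym, of _ W r] unfolding C_def by blast
    moreover have "card (C - {r}) < card W"
      using less.prems(1) C by (meson card_Diff1_less card_mono finite_subset order_less_le_trans)
    moreover have "finite (C - {r})" using less.prems(1) C(2) by (auto intro: finite_subset)
    ultimately obtain F1 where F1: "normal_forest E F1" "forest_verts F1 = C - {r}"
      "\<forall>t\<in>set F1. (r, root t) \<in> E \<and> parent_adjacent E t"
      using less.hyps by (metis mem_Collect_eq)
    have "(a, b) \<notin> E" if "a \<in> C" "b \<in> W - C" for a b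
      using that C(2) unfolding C_def by (auto intro: rtrancl_into_rtrancl)
    then have "separated E C (W - C)" using sym by (auto simp: separated_def)
    then have "normal_forest E (Node r F1 # F2)"
      using F1(1,2) F2(1,2) C(1) by (simp add: insert_absorb)
    moreover have "forest_verts (Node r F1 # F2) = W" using F1(2) F2(2) C by auto
    moreover have "\<forall>t\<in>set (Node r F1 # F2). root t \<in> R \<and> parent_adjacent E t"
      using F1(3) F2(3) r(1) by auto
    ultimately show ?thesis by blast
  qed
qed

lemma simple_path_iff:
  "simple_path (V, E, L) xs \<longleftrightarrow> xs \<noteq> [] \<and> distinct xs \<and> set xs \<subseteq> V \<and>
     (\<forall>i. Suc i < length xs \<longrightarrow> (xs ! i, xs ! Suc i) \<in> E)"
  by (simp add: simple_path_def)

lemma simple_path_singleton: "v \<in> V \<Longrightarrow> simple_path (V, E, L) [v]"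
  by (simp add: simple_path_iff)

lemma simple_path_snoc:
  assumes "simple_path (V, E, L) xs" and "(last xs, v) \<in> E" and "v \<in> V" and "v \<notin> set xs"
  shows "simple_path (V, E, L) (xs @ [v])"
  unfolding simple_path_iff
proof (intro conjI allI impI)
  fix i assume i: "Suc i < length (xs @ [v])"
  show "((xs @ [v]) ! i, (xs @ [v]) ! Suc i) \<in> E"
  proof (cases "Suc i < length xs")
    case True
    then show ?thesis using assms(1) by (simp add: simple_path_iff nth_append)
  next
    case False
    then have "Suc i = length xs" using i by simp
    moreover from this have "last xs = xs ! i"
      by (metis diff_Suc_1 last_conv_nth length_greater_0_conv zero_less_Suc)
    ultimately show ?thesis using assms(2) by (simp add: nth_append)
  qed
qed (use assms in \<open>auto simp: simple_path_iff\<close>)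

lemma annotate_in_bounded_trees:
  assumes bounded: "path_bounded k (V, E, L)" and labels: "\<forall>v\<in>V. L v \<in> S"
    and "parent_adjacent E t" and "normal_tree E t" and "tree_verts t \<subseteq> V"
    and "simple_path (V, E, L) (anc @ [root t])" and "set anc \<inter> tree_verts t = {}"
  shows "annotate E L anc t \<in> bounded_trees (S \<times> Pow {..<k}) (Suc k - length anc)"
  using assms(3-)
proof (induct t arbitrary: anc)
  case (Node v ts)
  have "length anc \<le> k" using bounded Node.prems(4) by (auto simp: path_bounded_def)
  then have height: "Suc k - length anc = Suc (Suc k - length (anc @ [v]))" by simp
  have "(L v, {i. i < length anc \<and> (anc ! i, v) \<in> E}) \<in> S \<times> Pow {..<k}"
    using labels Node.prems(3) \<open>length anc \<le> k\<close> by auto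
  moreover have "annotate E L (anc @ [v]) t
      \<in> bounded_trees (S \<times> Pow {..<k}) (Suc k - length (anc @ [v]))" if t: "t \<in> set ts" for t
  proof (rule Node.hyps[OF t])
    have "root t \<in> forest_verts ts" using t root_in_tree_verts by (auto simp: forest_verts_def)
    show "simple_path (V, E, L) ((anc @ [v]) @ [root t])"
    proof (rule simple_path_snoc)
      show "simple_path (V, E, L) (anc @ [v])" using Node.prems(4) by simp
      show "(last (anc @ [v]), root t) \<in> E" using Node.prems(1) t by simp
      show "root t \<in> V" "root t \<notin> set (anc @ [v])"
        using Node.prems(2,3,5) \<open>root t \<in> forest_verts ts\<close> by auto
    qed
    show "set (anc @ [v]) \<inter> tree_verts t = {}" using Node.prems t by (auto simp: forest_verts_def)
  qed (use Node.prems t in \<open>auto simp: normal_forest_def forest_verts_def\<close>)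
  ultimately show ?case unfolding height by auto
qed

section \<open>The induced subgraph order\<close>

lemma sgraph_le_refl:
  assumes "reflp_on S le" and "is_sgraph S G"
  shows "sgraph_le le G G"
proof -
  obtain V E L where G: "G = (V, E, L)" by (cases G)
  have "\<forall>u\<in>V. le (L u) (L u)" using assms by (auto simp: G is_sgraph_def reflp_on_def)
  then show ?thesis unfolding G sgraph_le_def by (simp add: exI[of _ id])
qed

lemma sgraph_le_trans:
  assumes "transp_on S le" and "is_sgraph S G1" "is_sgraph S G2" "is_sgraph S G3"
    and "sgraph_le le G1 G2" "sgraph_le le G2 G3"
  shows "sgraph_le le G1 G3"
proof -
  obtain V1 E1 L1 V2 E2 L2 V3 E3 L3
    where G: "G1 = (V1, E1, L1)" "G2 = (V2, E2, L2)" "G3 = (V3, E3, L3)"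
    by (metis prod_cases3)
  obtain h1 where h1: "inj_on h1 V1" "h1 ` V1 \<subseteq> V2"
    "\<forall>u\<in>V1. \<forall>v\<in>V1. (u, v) \<in> E1 \<longleftrightarrow> (h1 u, h1 v) \<in> E2" "\<forall>u\<in>V1. le (L1 u) (L2 (h1 u))"
    using assms(5) by (auto simp: G sgraph_le_def)
  obtain h2 where h2: "inj_on h2 V2" "h2 ` V2 \<subseteq> V3"
    "\<forall>u\<in>V2. \<forall>v\<in>V2. (u, v) \<in> E2 \<longleftrightarrow> (h2 u, h2 v) \<in> E3" "\<forall>u\<in>V2. le (L2 u) (L3 (h2 u))"
    using assms(6) by (auto simp: G sgraph_le_def)
  have labels: "\<forall>u\<in>V1. L1 u \<in> S" "\<forall>u\<in>V2. L2 u \<in> S" "\<forall>u\<in>V3. L3 u \<in> S"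
    using assms(2-4) by (simp_all add: G is_sgraph_def)
  have "inj_on (h2 \<circ> h1) V1" using h1(1) inj_on_subset[OF h2(1) h1(2)] by (rule comp_inj_on)
  moreover have "(h2 \<circ> h1) ` V1 \<subseteq> V3" using h1(2) h2(2) by auto
  moreover have "\<forall>u\<in>V1. \<forall>v\<in>V1. (u, v) \<in> E1 \<longleftrightarrow> ((h2 \<circ> h1) u, (h2 \<circ> h1) v) \<in> E3"
    using h1(2,3) h2(3) by (simp add: image_subset_iff)
  moreover have "\<forall>u\<in>V1. le (L1 u) (L3 ((h2 \<circ> h1) u))"
  proof
    fix u assume u: "u \<in> V1"
    then have "h1 u \<in> V2" "h2 (h1 u) \<in> V3" using h1(2) h2(2) by auto
    then show "le (L1 u) (L3 ((h2 \<circ> h1) u))"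
      using transp_onD[OF assms(1), of "L1 u" "L2 (h1 u)" "L3 (h2 (h1 u))"] u labels h1(4) h2(4)
      by simp
  qed
  ultimately show ?thesis unfolding G sgraph_le_def by blast
qed

definition forest_code_of :: "('v, 's) sgraph \<Rightarrow> ('s \<times> nat set) tree list \<Rightarrow> bool" where
  "forest_code_of G X \<longleftrightarrow> (case G of (V, E, L) \<Rightarrow>
     \<exists>F. normal_forest E F \<and> forest_verts F = V \<and> X = map (annotate E L []) F)"

lemma bounded_forest_code_exists:
  assumes "is_sgraph S G" and "path_bounded k G"
  shows "\<exists>X. forest_code_of G X \<and> X \<in> lists (bounded_trees (S \<times> Pow {..<k}) (Suc k))"
proof -
  obtain V E L where G: "G = (V, E, L)" by (cases G)
  have sym: "\<And>a b. (a, b) \<in> E \<Longrightarrow> (b, a) \<in> E" and "finite V" and labels: "\<forall>v\<in>V. L v \<in> S"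
    using assms(1) by (simp_all add: G is_sgraph_def)
  then obtain F where F: "normal_forest E F" "forest_verts F = V" "\<forall>t\<in>set F. parent_adjacent E t"
    using normal_forest_exists[OF sym \<open>finite V\<close>, of V] by blast
  have "annotate E L [] t \<in> bounded_trees (S \<times> Pow {..<k}) (Suc k)" if t: "t \<in> set F" for t
  proof -
    have "parent_adjacent E t" "normal_tree E t" using F(1,3) t by (simp_all add: normal_forest_def)
    moreover have "tree_verts t \<subseteq> V" using t F(2) by (auto simp: forest_verts_def)
    moreover from this have "simple_path (V, E, L) ([] @ [root t])"
      using root_in_tree_verts by (auto intro: simple_path_singleton)
    ultimately show ?thesis
      using annotate_in_bounded_trees[OF assms(2)[unfolded G] labels, where t = t and anc = "[]"]
      by simp
  qed
  then have "map (annotate E L []) F \<in> lists (bounded_trees (S \<times> Pow {..<k}) (Suc k))" by auto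
  then show ?thesis using F(1,2) unfolding G forest_code_of_def by blast
qed

lemma forest_code_emb_imp_sgraph_le:
  assumes "is_sgraph S G1" and "is_sgraph S G2"
    and "forest_code_of G1 X1" and "forest_code_of G2 X2"
    and "list_emb (tree_emb (prod_le le (=))) X1 X2"
  shows "sgraph_le le G1 G2"
proof -
  obtain V1 E1 L1 V2 E2 L2 where G: "G1 = (V1, E1, L1)" "G2 = (V2, E2, L2)"
    by (cases G1, cases G2)
  interpret graph_pair E1 E2 L1 L2 le
    using assms(1,2) by unfold_locales (auto simp: G is_sgraph_def)
  obtain F1 F2
    where F: "normal_forest E1 F1" "forest_verts F1 = V1" "X1 = map (annotate E1 L1 []) F1"
      "normal_forest E2 F2" "forest_verts F2 = V2" "X2 = map (annotate E2 L2 []) F2"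
    using assms(3,4) by (auto simp: G forest_code_of_def)
  have "list_emb (\<lambda>t u. tree_emb (prod_le le (=)) (annotate E1 L1 [] t) (annotate E2 L2 [] u))
      F1 F2"
    using assms(5) by (simp add: F(3,6) list_emb_map)
  then have "\<exists>h. anc_emb [] [] (forest_verts F1) (forest_verts F2) h"
  proof (rule forest_emb_imp_anc_emb[OF _ _ F(1,4)])
    fix t u assume "t \<in> set F1" "u \<in> set F2"
      and "tree_emb (prod_le le (=)) (annotate E1 L1 [] t) (annotate E2 L2 [] u)"
    then show "\<exists>h. anc_emb [] [] (tree_verts t) (tree_verts u) h"
      using F(1,4) by (intro annotated_tree_emb_imp_anc_emb) (auto simp: normal_forest_def)
  qed
  then show ?thesis by (auto simp: G F(2,5) sgraph_le_def anc_emb_def)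
qed

theorem lemma15:
  fixes le :: "'s \<Rightarrow> 's \<Rightarrow> bool" and S :: "'s set" and k :: nat
  assumes "wqo_on le S"
  shows "wqo_on (sgraph_le le) {G :: (nat, 's) sgraph. is_sgraph S G \<and> path_bounded k G}"
proof -
  let ?G = "{G :: (nat, 's) sgraph. is_sgraph S G \<and> path_bounded k G}"
  let ?T = "bounded_trees (S \<times> Pow {..<k}) (Suc k)"
  have le: "reflp_on S le" "transp_on S le" "almost_full_on le S"
    using assms by (simp_all add: wqo_on_iff)
  have af: "almost_full_on (list_emb (tree_emb (prod_le le (=)))) (lists ?T)"
    by (intro almost_full_on_lists almost_full_on_bounded_trees almost_full_on_prod
        almost_full_on_finite le(3)) (simp_all add: reflp_on_def)
  have "\<forall>G\<in>?G. \<exists>X. forest_code_of G X \<and> X \<in> lists ?T"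
    using bounded_forest_code_exists by blast
  then have "\<exists>code. \<forall>G\<in>?G. forest_code_of G (code G) \<and> code G \<in> lists ?T"
    by (rule bchoice)
  then obtain code where code: "\<forall>G\<in>?G. forest_code_of G (code G) \<and> code G \<in> lists ?T" ..
  have "almost_full_on (sgraph_le le) ?G"
  proof (rule almost_full_on_map[OF af])
    show "code ` ?G \<subseteq> lists ?T" using code by blast
    fix G1 G2 assume G: "G1 \<in> ?G" "G2 \<in> ?G"
      and emb: "list_emb (tree_emb (prod_le le (=))) (code G1) (code G2)"
    have "is_sgraph S G1" "is_sgraph S G2"
      and "forest_code_of G1 (code G1)" "forest_code_of G2 (code G2)"
      using G code by blast+
    then show "sgraph_le le G1 G2" using emb by (rule forest_code_emb_imp_sgraph_le)
  qed
  moreover have "reflp_on ?G (sgraph_le le)"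
    by (rule reflp_onI) (simp add: sgraph_le_refl[OF le(1)])
  moreover have "transp_on ?G (sgraph_le le)"
    by (rule transp_onI) (blast intro: sgraph_le_trans[OF le(2)])
  ultimately show ?thesis by (simp add: wqo_on_iff)
qed

end
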